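(* Let $0<\alpha<1$ and suppose the Hilbert matrix operator $\mathcal{H}$ acts as an operator $\mathcal{H}\colon H^\infty_\alpha\to H^\infty_\alpha$. Then $$\|\mathcal{H}\|_{H^\infty_\alpha\to H^\infty_\alpha}\ \ge\ \frac{\pi}{\sin(\pi\alpha)}.$$
   Context: $\mathbb D=\{z\in\mathbb C:|z|<1\}$ and $H(\mathbb D)$ denotes the analytic functions on $\mathbb D$. For $0<\alpha<1$, the Korenblum space is $H^\infty_\alpha=\{f\in H(\mathbb D): \|f\|_{H^\infty_\alpha}=\sup_{z\in\mathbb D}(1-|z|^2)^\alpha|f(z)|<\infty\}$. The Hilbert matrix operator acts on $f(z)=\sum_{k\ge0}a_kz^k$ by $\mathcal{H}(f)(z)=\sum_{n\ge0}\big(\sum_{k\ge0}\frac{a_k}{n+k+1}\big)z^n$; equivalently $\mathcal{H}(f)(z)=\int_0^1 T_t(f)(z)\,dt$, where $T_t(f)(z)=\omega_t(z)f(\phi_t(z))$ with $\omega_t(z)=\frac{1}{(t-1)z+1}$ and $\phi_t(z)=\frac{t}{(t-1)z+1}$, $0<t<1$. *)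

theory Defs
  imports "HOL-Analysis.Analysis"
begin

definition korenblum_norm :: "real \<Rightarrow> (complex \<Rightarrow> complex) \<Rightarrow> real" where
  "korenblum_norm \<alpha> f = (SUP z\<in>ball (0::complex) 1. (1 - (cmod z)\<^sup>2) powr \<alpha> * cmod (f z))"

definition korenblum :: "real \<Rightarrow> (complex \<Rightarrow> complex) \<Rightarrow> bool" where
  "korenblum \<alpha> f \<longleftrightarrow> f holomorphic_on ball 0 1 \<and>
     bdd_above ((\<lambda>z. (1 - (cmod z)\<^sup>2) powr \<alpha> * cmod (f z)) ` ball (0::complex) 1)"

text \<open>Weighted composition operators T_t and the Hilbert matrix operator (integral form).\<close>

definition omega_t :: "real \<Rightarrow> complex \<Rightarrow> complex" where
  "omega_t t z = 1 / ((complex_of_real t - 1) * z + 1)"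

definition phi_t :: "real \<Rightarrow> complex \<Rightarrow> complex" where
  "phi_t t z = complex_of_real t / ((complex_of_real t - 1) * z + 1)"

definition hilbert_op :: "(complex \<Rightarrow> complex) \<Rightarrow> complex \<Rightarrow> complex" where
  "hilbert_op f z = integral {0..1} (\<lambda>t::real. omega_t t z * f (phi_t t z))"

definition hilbert_opnorm :: "real \<Rightarrow> ereal" where
  "hilbert_opnorm \<alpha> = (SUP f\<in>{f. korenblum \<alpha> f \<and> korenblum_norm \<alpha> f \<noteq> 0}.
       ereal (korenblum_norm \<alpha> (hilbert_op f) / korenblum_norm \<alpha> f))"

end

theory Submission
  imports Defs
begin

(* The extremal function f z = (1 - z) powr (-\<alpha>) of the Korenblum space has norm at most
   2 powr \<alpha>. On the radius 0 < x < 1 the integrand of H f is explicit, and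
   (1 - x^2) powr \<alpha> * |H f x| = (1 + x) powr \<alpha> * I x, where I x is the integral over (0,1)
   of beta_kernel \<alpha> x. As x \<rightarrow> 1 the kernel tends, dominated by its value at x = 1, to the
   Beta integrand t powr (\<alpha> - 1) * (1 - t) powr (-\<alpha>), so I x \<rightarrow> Beta \<alpha> (1 - \<alpha>) = pi / sin (pi \<alpha>)
   by the reflection formula. Since (1 + x) powr \<alpha> \<rightarrow> 2 powr \<alpha>, dividing by the norm bound for f
   gives the claim. *)

lemma korenblum_weighted_le_norm:
  assumes "korenblum a f" "z \<in> ball 0 1"
  shows "(1 - (cmod z)\<^sup>2) powr a * cmod (f z) \<le> korenblum_norm a f"
  using assms unfolding korenblum_def korenblum_norm_def by (auto intro: cSUP_upper)

lemma korenblum_norm_nonneg: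
  assumes "korenblum a f"
  shows "0 \<le> korenblum_norm a f"
  using korenblum_weighted_le_norm[OF assms, of 0] by simp (meson norm_ge_zero order_trans)

lemma hilbert_opnorm_ge:
  assumes "korenblum a f" "korenblum_norm a f \<noteq> 0"
  shows "ereal (korenblum_norm a (hilbert_op f) / korenblum_norm a f) \<le> hilbert_opnorm a"
  unfolding hilbert_opnorm_def using assms by (auto intro: SUP_upper)

lemma Beta_reflection: "Beta a (1 - a) = pi / sin (pi * a)"
proof -
  have "complex_of_real (Gamma a * Gamma (1 - a)) = Gamma (of_real a) * Gamma (1 - of_real a)"
    using Gamma_complex_of_real[of "1 - a"] by (simp add: Gamma_complex_of_real)
  also have "\<dots> = of_real pi / sin (of_real pi * of_real a)"
    by (rule Gamma_reflection_complex)
  also have "\<dots> = of_real (pi / sin (pi * a))"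
    by (simp flip: sin_of_real)
  finally show ?thesis
    unfolding Beta_def of_real_eq_iff by simp
qed

definition korenblum_extremal :: "real \<Rightarrow> complex \<Rightarrow> complex" where
  "korenblum_extremal a z = (1 - z) powr (- complex_of_real a)"

lemma holomorphic_on_korenblum_extremal: "korenblum_extremal a holomorphic_on ball 0 1"
  unfolding korenblum_extremal_def
proof (intro holomorphic_intros)
  fix z :: complex
  assume "z \<in> ball 0 1"
  then have "Re z < 1"
    using complex_Re_le_cmod[of z] by simp
  then show "1 - z \<notin> \<real>\<^sub>\<le>\<^sub>0"
    by (simp add: complex_nonpos_Reals_iff)
qed

lemma korenblum_extremal_weighted_le:
  assumes "0 \<le> a" "z \<in> ball 0 1"
  shows "(1 - (cmod z)\<^sup>2) powr a * cmod (korenblum_extremal a z) \<le> 2 powr a"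
proof -
  define r where "r = cmod (1 - z)"
  have z: "cmod z < 1"
    using assms by simp
  have r: "1 - cmod z \<le> r"
    unfolding r_def by (metis norm_one norm_triangle_ineq2)
  have r_pos: "0 < r"
    using r z by linarith
  have "1 - (cmod z)\<^sup>2 = (1 - cmod z) * (1 + cmod z)"
    by (simp add: power2_eq_square algebra_simps)
  also have "\<dots> \<le> (1 - cmod z) * 2"
    using z by (intro mult_left_mono) auto
  also have "\<dots> \<le> 2 * r"
    using r by simp
  finally have weight: "1 - (cmod z)\<^sup>2 \<le> 2 * r" .
  have "(1 - (cmod z)\<^sup>2) powr a * r powr (-a) \<le> (2 * r) powr a * r powr (-a)"
    using weight z assms(1) by (intro mult_right_mono powr_mono2) (auto simp: abs_square_le_1)
  also have "\<dots> = 2 powr a"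
    using r_pos by (simp add: powr_mult powr_minus)
  finally show ?thesis
    unfolding korenblum_extremal_def r_def by (simp add: norm_powr_real_powr')
qed

lemma korenblum_korenblum_extremal:
  assumes "0 \<le> a"
  shows "korenblum a (korenblum_extremal a)"
  unfolding korenblum_def using korenblum_extremal_weighted_le[OF assms]
  by (intro conjI holomorphic_on_korenblum_extremal bdd_aboveI2) auto

lemma korenblum_norm_extremal_le:
  assumes "0 \<le> a"
  shows "korenblum_norm a (korenblum_extremal a) \<le> 2 powr a"
  unfolding korenblum_norm_def using korenblum_extremal_weighted_le[OF assms]
  by (auto intro: cSUP_least)

lemma korenblum_norm_extremal_pos:
  assumes "0 \<le> a"
  shows "0 < korenblum_norm a (korenblum_extremal a)"
  using korenblum_weighted_le_norm[OF korenblum_korenblum_extremal[OF assms], of 0]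
  by (simp add: korenblum_extremal_def)

definition beta_kernel :: "real \<Rightarrow> real \<Rightarrow> real \<Rightarrow> real" where
  "beta_kernel a x t = (1 - t) powr (-a) * (t + (1 - t) * (1 - x)) powr (a - 1)"

lemma omega_phi_korenblum_extremal:
  assumes "x < 1" "0 < t" "t < 1"
  shows "omega_t t x * korenblum_extremal a (phi_t t x)
    = of_real ((1 - x) powr (-a) * beta_kernel a x t)"
proof -
  define D where "D = t + (1 - t) * (1 - x)"
  have D: "0 < D"
    unfolding D_def using assms by (smt (verit) mult_pos_pos)
  have denom: "(complex_of_real t - 1) * of_real x + 1 = of_real D"
    unfolding D_def by (simp add: algebra_simps)
  have "phi_t t x = of_real (t / D)"
    unfolding phi_t_def denom by simp
  moreover have "1 - t / D = (1 - t) * (1 - x) / D"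
    using D unfolding D_def by (simp add: field_simps)
  ultimately have "1 - phi_t t x = of_real ((1 - t) * (1 - x) / D)"
    by (metis of_real_1 of_real_diff)
  then have "korenblum_extremal a (phi_t t x) = of_real (((1 - t) * (1 - x) / D) powr (-a))"
    unfolding korenblum_extremal_def using assms D by (simp flip: powr_of_real)
  also have "((1 - t) * (1 - x) / D) powr (-a) = (1 - x) powr (-a) * (1 - t) powr (-a) * D powr a"
    using assms D by (simp add: powr_divide powr_mult powr_minus_divide)
  finally have extremal:
    "korenblum_extremal a (phi_t t x) = of_real ((1 - x) powr (-a) * (1 - t) powr (-a) * D powr a)" .
  have "omega_t t x = of_real (1 / D)"
    unfolding omega_t_def denom by simp
  with extremal D show ?thesis
    unfolding beta_kernel_def D_def[symmetric] by (simp add: powr_diff field_simps flip: of_real_mult)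
qed

lemma beta_kernel_nonneg: "0 \<le> beta_kernel a x t"
  unfolding beta_kernel_def by simp

lemma beta_kernel_le_beta_kernel_1:
  assumes "a \<le> 1" "x \<le> 1" "0 < t" "t \<le> 1"
  shows "beta_kernel a x t \<le> beta_kernel a 1 t"
proof -
  have "(t + (1 - t) * (1 - x)) powr (a - 1) \<le> t powr (a - 1)"
    using assms by (intro powr_mono2') auto
  then show ?thesis
    unfolding beta_kernel_def by (simp add: mult_left_mono)
qed

lemma continuous_on_beta_kernel:
  assumes "x \<le> 1"
  shows "continuous_on {0<..<1} (beta_kernel a x)"
proof -
  have "t + (1 - t) * (1 - x) \<noteq> 0" if "t \<in> {0<..<1}" for t
    using that assms by (smt (verit) greaterThanLessThan_iff mult_nonneg_nonneg)
  then show ?thesis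
    unfolding beta_kernel_def by (intro continuous_intros) auto
qed

lemma isCont_beta_kernel_at_1:
  assumes "0 < t"
  shows "isCont (\<lambda>x. beta_kernel a x t) 1"
  unfolding beta_kernel_def using assms by (intro continuous_intros) auto

lemma has_integral_beta_kernel_1:
  assumes "0 < a" "a < 1"
  shows "(beta_kernel a 1 has_integral pi / sin (pi * a)) {0<..<1}"
proof -
  have "((\<lambda>t. t powr (a - 1) * (1 - t) powr (-a)) has_integral pi / sin (pi * a)) {0<..<1}"
    using has_integral_Beta_real[of a "1 - a"] assms
    by (simp add: Beta_reflection has_integral_Icc_iff_Ioo)
  then show ?thesis
    by (rule has_integral_cong[THEN iffD1, rotated]) (simp add: beta_kernel_def mult.commute)
qed

lemma beta_kernel_integrable:
  assumes "0 < a" "a < 1" "x \<le> 1"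
  shows "beta_kernel a x integrable_on {0<..<1}"
proof (rule measurable_bounded_by_integrable_imp_integrable_real)
  show "{0<..<1::real} \<in> sets lebesgue"
    by simp
  show "beta_kernel a x \<in> borel_measurable (lebesgue_on {0<..<1})"
    using continuous_on_beta_kernel[OF assms(3)]
    by (rule continuous_imp_measurable_on_sets_lebesgue) simp
  show "beta_kernel a 1 integrable_on {0<..<1}"
    using has_integral_beta_kernel_1[OF assms(1,2)] by blast
  show "\<bar>beta_kernel a x t\<bar> \<le> beta_kernel a 1 t" if "t \<in> {0<..<1}" for t
    using that assms beta_kernel_le_beta_kernel_1 by (simp add: beta_kernel_nonneg)
qed

lemma integral_beta_kernel_tendsto:
  assumes "0 < a" "a < 1"
  shows "((\<lambda>x. integral {0<..<1} (beta_kernel a x)) \<longlongrightarrow> pi / sin (pi * a)) (at_left 1)"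
proof (rule tendsto_at_left_sequentially[of 0])
  fix S :: "nat \<Rightarrow> real"
  assume S: "\<And>n. S n < 1" "S \<longlonglongrightarrow> 1"
  have "(\<lambda>n. integral {0<..<1} (beta_kernel a (S n))) \<longlonglongrightarrow> integral {0<..<1} (beta_kernel a 1)"
  proof (rule dominated_convergence)
    show "beta_kernel a (S n) integrable_on {0<..<1}" for n
      using S(1)[of n] assms by (intro beta_kernel_integrable) auto
    show "beta_kernel a 1 integrable_on {0<..<1}"
      using beta_kernel_integrable[OF assms] by simp
    show "norm (beta_kernel a (S n) t) \<le> beta_kernel a 1 t" if "t \<in> {0<..<1}" for n t
      using that assms S(1)[of n] beta_kernel_le_beta_kernel_1 by (simp add: beta_kernel_nonneg)
    show "(\<lambda>n. beta_kernel a (S n) t) \<longlonglongrightarrow> beta_kernel a 1 t" if "t \<in> {0<..<1}" for t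
      using that isCont_tendsto_compose[OF isCont_beta_kernel_at_1 S(2)] by simp
  qed
  then show "(\<lambda>n. integral {0<..<1} (beta_kernel a (S n))) \<longlonglongrightarrow> pi / sin (pi * a)"
    using integral_unique[OF has_integral_beta_kernel_1[OF assms]] by simp
qed simp

lemma hilbert_op_korenblum_extremal:
  assumes "0 < a" "a < 1" "x < 1"
  shows "hilbert_op (korenblum_extremal a) x
    = of_real ((1 - x) powr (-a) * integral {0<..<1} (beta_kernel a x))"
proof -
  have "((\<lambda>t. (1 - x) powr (-a) * beta_kernel a x t)
      has_integral (1 - x) powr (-a) * integral {0<..<1} (beta_kernel a x)) {0<..<1}"
    using beta_kernel_integrable[of a x] assms by (intro has_integral_mult_right) auto
  then have "((\<lambda>t. omega_t t x * korenblum_extremal a (phi_t t x))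
      has_integral of_real ((1 - x) powr (-a) * integral {0<..<1} (beta_kernel a x))) {0<..<1}"
    by (rule has_integral_cong[THEN iffD1, rotated, OF has_integral_of_real])
      (simp add: omega_phi_korenblum_extremal assms)
  then show ?thesis
    unfolding hilbert_op_def has_integral_Icc_iff_Ioo[symmetric] by (rule integral_unique)
qed

lemma korenblum_norm_hilbert_op_extremal_ge:
  assumes "0 < a" "a < 1" "-1 < x" "x < 1" and H: "korenblum a (hilbert_op (korenblum_extremal a))"
  shows "(1 + x) powr a * integral {0<..<1} (beta_kernel a x)
    \<le> korenblum_norm a (hilbert_op (korenblum_extremal a))"
proof -
  let ?I = "integral {0<..<1} (beta_kernel a x)"
  have "0 \<le> ?I"
    using assms by (intro integral_nonneg beta_kernel_integrable beta_kernel_nonneg) auto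
  then have "cmod (hilbert_op (korenblum_extremal a) x) = (1 - x) powr (-a) * ?I"
    using assms by (simp only: hilbert_op_korenblum_extremal norm_of_real) simp
  moreover have "(1 - x\<^sup>2) powr a = (1 + x) powr a * (1 - x) powr a"
    using assms by (simp add: power2_eq_square algebra_simps flip: powr_mult)
  ultimately have "(1 - x\<^sup>2) powr a * cmod (hilbert_op (korenblum_extremal a) x)
      = (1 + x) powr a * ((1 - x) powr a * (1 - x) powr (-a)) * ?I"
    by (simp only: mult.assoc)
  also have "(1 - x) powr a * (1 - x) powr (-a) = 1"
    using assms by (simp flip: powr_add)
  finally have "(1 + x) powr a * ?I = (1 - x\<^sup>2) powr a * cmod (hilbert_op (korenblum_extremal a) x)"
    by simp
  also have "\<dots> \<le> korenblum_norm a (hilbert_op (korenblum_extremal a))"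
    using korenblum_weighted_le_norm[OF H, of x] assms by simp
  finally show ?thesis .
qed

theorem mainTheorem1:
  fixes \<alpha> :: real
  assumes "0 < \<alpha>" and "\<alpha> < 1"
    and "\<And>f. korenblum \<alpha> f \<Longrightarrow> korenblum \<alpha> (hilbert_op f)"
  shows "ereal (pi / sin (pi * \<alpha>)) \<le> hilbert_opnorm \<alpha>"
proof -
  let ?f = "korenblum_extremal \<alpha>"
  let ?r = "\<lambda>x. (1 + x) powr \<alpha> * integral {0<..<1} (beta_kernel \<alpha> x) / 2 powr \<alpha>"
  define N where "N = korenblum_norm \<alpha> ?f"
  define M where "M = korenblum_norm \<alpha> (hilbert_op ?f)"
  have f: "korenblum \<alpha> ?f" and Hf: "korenblum \<alpha> (hilbert_op ?f)" and N: "0 < N" "N \<le> 2 powr \<alpha>"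
    using assms korenblum_korenblum_extremal korenblum_norm_extremal_pos korenblum_norm_extremal_le
    unfolding N_def by auto
  have "?r x \<le> M / N" if "0 < x" "x < 1" for x
    using korenblum_norm_hilbert_op_extremal_ge[OF assms(1,2) _ _ Hf, of x] korenblum_norm_nonneg[OF Hf]
      N that
    unfolding M_def by (intro frac_le) auto
  moreover have "(?r \<longlongrightarrow> (1 + 1) powr \<alpha> * (pi / sin (pi * \<alpha>)) / 2 powr \<alpha>) (at_left 1)"
    by (intro tendsto_divide tendsto_mult tendsto_powr tendsto_add tendsto_const tendsto_ident_at
        integral_beta_kernel_tendsto assms) auto
  ultimately have "pi / sin (pi * \<alpha>) \<le> M / N"
    by (intro tendsto_upperbound[where F = "at_left 1"])
      (auto intro: eventually_mono[OF eventually_at_left_real[of 0 1]])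
  also have "ereal (M / N) \<le> hilbert_opnorm \<alpha>"
    using f N(1) unfolding M_def N_def by (intro hilbert_opnorm_ge) auto
  finally show ?thesis
    by simp
qed

end
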